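(* For every $0<\alpha<10^{-5}$ there exists $m_0$ such that for all $m\ge m_0$ the following holds. Suppose $H$ is a $3$-graph on $V=A\cup B$ where $A,B$ are disjoint with $|A|=|B|=6m$, and every vertex of $H$ is $\alpha$-good in $H$ with respect to $\mathcal B[A,B]$. Then $H$ contains a $K_4^-$-factor.
   Context: $K_4^-$ is the $3$-graph with $4$ vertices and $3$ edges; a $K_4^-$-factor is a set of vertex-disjoint (not necessarily induced) copies covering all vertices. For disjoint $A,B$, $\mathcal B[A,B]$ is the $3$-graph on $A\cup B$ whose edges are all triples containing an odd number of vertices of $A$. For $3$-graphs $H,H'$ on the same vertex set $V$ with $|V|=n$, a vertex $v$ is $\alpha$-good in $H$ with respect to $H'$ if the number of edges of $H'$ containing $v$ that are not edges of $H$ is at most $\alpha n^2$. *)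

theory Defs
  imports Complex_Main "HOL-Library.Disjoint_Sets"
begin

definition is_3graph :: "'a set \<Rightarrow> 'a set set \<Rightarrow> bool" where
  "is_3graph V H \<longleftrightarrow> (\<forall>e\<in>H. e \<subseteq> V \<and> card e = 3)"

definition bip3 :: "'a set \<Rightarrow> 'a set \<Rightarrow> 'a set set" where
  "bip3 A B = {e. e \<subseteq> A \<union> B \<and> card e = 3 \<and> odd (card (e \<inter> A))}"

definition alpha_good :: "real \<Rightarrow> 'a set \<Rightarrow> 'a set set \<Rightarrow> 'a set set \<Rightarrow> 'a \<Rightarrow> bool" where
  "alpha_good \<alpha> V H H' v \<longleftrightarrow>
     real (card {e\<in>H'. v \<in> e \<and> e \<notin> H}) \<le> \<alpha> * (real (card V))^2"

text \<open>S spans a (not necessarily induced) copy of K4^- in H: |S| = 4 and at least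
  3 of the 3-subsets of S are edges of H (any 3 triples on 4 vertices form a K4^-).\<close>
definition K4minus_copy :: "'a set set \<Rightarrow> 'a set \<Rightarrow> bool" where
  "K4minus_copy H S \<longleftrightarrow> card S = 4 \<and> card {e\<in>H. e \<subseteq> S} \<ge> 3"

definition has_K4minus_factor :: "'a set \<Rightarrow> 'a set set \<Rightarrow> bool" where
  "has_K4minus_factor V H \<longleftrightarrow>
     (\<exists>P. partition_on V P \<and> (\<forall>S\<in>P. K4minus_copy H S))"

end

theory Submission
  imports Defs "HOL-Number_Theory.Cong"
begin

(* Call a 4-set a parity block if it lies in A, or meets A in one vertex and B in three. Its three
   triples through a vertex of A lie in B[A,B], so a parity block containing no missing edge (an
   edge of B[A,B] absent from H) spans a copy of K4^-. Partitions of A \<union> B into parity blocks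
   exist; take one with the greatest number of blocks free of missing edges. If some block B0 is
   not free, averaging against the degree bound \<alpha>(12m)\<^sup>2 of the missing edges yields three
   further blocks of the same shape such that no missing edge meets three of the four blocks.
   Write the four blocks as the rows of a 4 \<times> 4 grid whose columns separate A from B; its four
   cyclic diagonals are parity blocks meeting every row once, hence free. Replacing the rows by the
   diagonals increases the number of free blocks, a contradiction. *)

definition parity_block :: "'a set \<Rightarrow> 'a set \<Rightarrow> 'a set \<Rightarrow> bool" where
  "parity_block A B S \<longleftrightarrow> S \<subseteq> A \<union> B \<and>
     (card (S \<inter> A) = 4 \<and> card (S \<inter> B) = 0 \<or> card (S \<inter> A) = 1 \<and> card (S \<inter> B) = 3)"

definition spans_no_edge :: "'a set set \<Rightarrow> 'a set \<Rightarrow> bool" where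
  "spans_no_edge M S \<longleftrightarrow> (\<forall>e\<in>M. \<not> e \<subseteq> S)"

definition no_edge_meets_three :: "'a set set \<Rightarrow> 'a set set \<Rightarrow> bool" where
  "no_edge_meets_three M Bs \<longleftrightarrow> (\<forall>e\<in>M. \<forall>X\<in>Bs. \<forall>Y\<in>Bs. \<forall>Z\<in>Bs.
     X \<noteq> Y \<and> X \<noteq> Z \<and> Y \<noteq> Z \<longrightarrow> e \<inter> X = {} \<or> e \<inter> Y = {} \<or> e \<inter> Z = {})"

definition crossing_edges :: "'a set set \<Rightarrow> 'a set \<Rightarrow> 'a set \<Rightarrow> 'a set set" where
  "crossing_edges M X Y = {e\<in>M. e \<inter> X \<noteq> {} \<and> e \<inter> Y \<noteq> {}}"

definition crossed_blocks :: "'a set set \<Rightarrow> 'a set set \<Rightarrow> 'a set \<Rightarrow> 'a set \<Rightarrow> 'a set set" where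
  "crossed_blocks M C X Y = {T\<in>C. \<exists>e\<in>crossing_edges M X Y. e \<inter> T \<noteq> {}}"

section \<open>Parity blocks\<close>

lemma card_eq_card_Int_add_card_Int:
  assumes "finite S" "S \<subseteq> A \<union> B" "A \<inter> B = {}"
  shows "card S = card (S \<inter> A) + card (S \<inter> B)"
proof -
  have "S - A = S \<inter> B" using assms(2,3) by blast
  then show ?thesis using card_Int_Diff[OF assms(1), of A] by simp
qed

lemma card_parity_block:
  assumes "parity_block A B S" "A \<inter> B = {}" "finite A" "finite B"
  shows "card S = 4"
proof -
  have "finite S" using assms(1,3,4) unfolding parity_block_def by (meson finite_Un finite_subset)
  then show ?thesis
    using assms card_eq_card_Int_add_card_Int[of S A B] unfolding parity_block_def by auto
qed

lemma parity_block_if_same_profile: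
  assumes "A \<inter> B = {}" "finite A" "finite B" "parity_block A B S"
    and "N \<subseteq> A \<union> B" "card N = card S" "card (N \<inter> A) = card (S \<inter> A)"
  shows "parity_block A B N"
proof -
  have "finite N" "finite S" using assms(2,3,4,5) unfolding parity_block_def by (auto intro: finite_subset)
  then have "card (N \<inter> B) = card (S \<inter> B)"
    using card_eq_card_Int_add_card_Int[of N A B] card_eq_card_Int_add_card_Int[of S A B]
      assms(1,4-7) unfolding parity_block_def by simp
  then show ?thesis using assms(4,5,7) unfolding parity_block_def by simp
qed

lemma K4minus_copyI:
  assumes "card S = 4" "a \<in> S" "\<And>x. x \<in> S - {a} \<Longrightarrow> S - {x} \<in> H"
  shows "K4minus_copy H S"
proof -
  have "finite S" using assms(1) card.infinite by fastforce
  have "inj_on (\<lambda>x. S - {x}) (S - {a})" by (rule inj_onI) auto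
  then have "card ((\<lambda>x. S - {x}) ` (S - {a})) = 3"
    using assms(1,2) \<open>finite S\<close> by (simp add: card_image)
  moreover have "(\<lambda>x. S - {x}) ` (S - {a}) \<subseteq> {e\<in>H. e \<subseteq> S}" using assms(3) by auto
  moreover have "finite {e\<in>H. e \<subseteq> S}" using \<open>finite S\<close> by (rule_tac finite_subset[of _ "Pow S"]) auto
  ultimately show ?thesis using assms(1) card_mono unfolding K4minus_copy_def by metis
qed

(* For a \<in> S \<inter> A, each triple S - {x} with x \<noteq> a meets A in 3 or in 1 vertices. *)
lemma K4minus_copy_if_parity_block:
  assumes "A \<inter> B = {}" "finite A" "finite B" "parity_block A B S"
    and "spans_no_edge (bip3 A B - H) S"
  shows "K4minus_copy H S"
proof -
  have S: "card S = 4" "S \<subseteq> A \<union> B" "finite S"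
    using card_parity_block[OF assms(4,1-3)] assms(4) unfolding parity_block_def
    by (auto intro: card_ge_0_finite)
  have "S \<inter> A \<noteq> {}" using assms(4) unfolding parity_block_def by auto
  then obtain a where a: "a \<in> S" "a \<in> A" by blast
  have "S - {x} \<in> H" if x: "x \<in> S - {a}" for x
  proof -
    have "(S - {x}) \<inter> A = (S \<inter> A) - {x}" by blast
    then have "card ((S - {x}) \<inter> A) = card (S \<inter> A) - (if x \<in> A then 1 else 0)"
      using S(3) x by (simp add: card_Diff_singleton_if)
    moreover have "x \<notin> A" if "card (S \<inter> A) = 1"
    proof -
      obtain b where "S \<inter> A = {b}" using \<open>card (S \<inter> A) = 1\<close> by (rule card_1_singletonE)
      then show ?thesis using a x by (metis Diff_iff IntI singletonD)
    qed
    moreover have "x \<in> A" if "card (S \<inter> B) = 0"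
      using that x S(2,3) by auto
    ultimately have "odd (card ((S - {x}) \<inter> A))"
      using assms(4) unfolding parity_block_def by auto
    moreover have "card (S - {x}) = 3" using S x by simp
    ultimately have "S - {x} \<in> bip3 A B" using S(2) unfolding bip3_def by auto
    then show ?thesis using assms(5) unfolding spans_no_edge_def by blast
  qed
  then show ?thesis using K4minus_copyI[OF S(1) a(1)] by blast
qed

section \<open>Partitions into blocks\<close>

lemma exists_partition_card_eq:
  assumes "finite X" "card X = k * n" "n > 0"
  shows "\<exists>P. partition_on X P \<and> (\<forall>S\<in>P. card S = n)"
  using assms(1,2)
proof (induction k arbitrary: X)
  case 0
  then show ?case using assms(3) by (auto simp: partition_on_empty)
next
  case (Suc k)
  then obtain Y where Y: "Y \<subseteq> X" "card Y = n" by (metis obtain_subset_with_card_n le_add1 mult_Suc)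
  have "card (X - Y) = k * n" using Suc.prems Y by (simp add: card_Diff_subset finite_subset)
  then obtain P where P: "partition_on (X - Y) P" "\<forall>S\<in>P. card S = n"
    using Suc.IH[of "X - Y"] Suc.prems(1) by blast
  have "disjnt Y (\<Union>P)" using P(1) unfolding partition_on_def disjnt_def by blast
  moreover have "Y \<noteq> {}" using Y(2) assms(3) by auto
  ultimately have "partition_on X (insert Y P)" using P(1) Y(1) partition_on_insert by metis
  then show ?case using P(2) Y(2) by blast
qed

lemma exists_parity_block_partition:
  assumes "A \<inter> B = {}" "finite A" "finite B" "card A = 4 * p + q" "card B = 3 * q"
  shows "\<exists>P. partition_on (A \<union> B) P \<and> (\<forall>S\<in>P. parity_block A B S)"
  using assms
proof (induction q arbitrary: A B)
  case 0
  then obtain P where P: "partition_on A P" "\<forall>S\<in>P. card S = 4"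
    using exists_partition_card_eq[of A p 4] by auto
  have "S \<subseteq> A" if "S \<in> P" for S using P(1) that unfolding partition_on_def by blast
  then have "\<forall>S\<in>P. parity_block A B S" using P(2) "0.prems"(1,3,5) unfolding parity_block_def
    by (simp add: Int_absorb2)
  moreover have "B = {}" using "0.prems"(1,3,5) by simp
  ultimately show ?case using P(1) by auto
next
  case (Suc q)
  obtain a where a: "a \<in> A" using Suc.prems(4) by fastforce
  obtain Y where Y: "Y \<subseteq> B" "card Y = 3"
    using Suc.prems(5) by (metis obtain_subset_with_card_n le_add1 mult_Suc_right)
  have "card (A - {a}) = 4 * p + q" "card (B - Y) = 3 * q"
    using Suc.prems a Y by (simp_all add: card_Diff_subset finite_subset)
  then obtain P where P: "partition_on ((A - {a}) \<union> (B - Y)) P"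
    and blocks: "\<forall>S\<in>P. parity_block (A - {a}) (B - Y) S"
    using Suc.IH[of "A - {a}" "B - Y"] Suc.prems(1-3) by blast
  let ?S = "insert a Y"
  have "\<Union>P = (A - {a}) \<union> (B - Y)" using P(1) by (simp add: partition_on_def)
  then have "disjnt ?S (\<Union>P)" using Y(1) a Suc.prems(1) unfolding disjnt_def by blast
  moreover have "A \<union> B - ?S = (A - {a}) \<union> (B - Y)" using a Y(1) Suc.prems(1) by blast
  moreover have "?S \<subseteq> A \<union> B" using a Y(1) by blast
  ultimately have "partition_on (A \<union> B) (insert ?S P)"
    using P(1) partition_on_insert by (metis insert_not_empty)
  moreover have "parity_block A B S" if "S \<in> P" for S
  proof -
    have "S \<subseteq> (A - {a}) \<union> (B - Y)" using P(1) that unfolding partition_on_def by blast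
    then have "S \<inter> (A - {a}) = S \<inter> A" "S \<inter> (B - Y) = S \<inter> B"
      using a Suc.prems(1) by auto
    then show ?thesis using blocks that unfolding parity_block_def by auto
  qed
  moreover have "parity_block A B ?S"
  proof -
    have SA: "?S \<inter> A = {a}" and SB: "?S \<inter> B = Y" using a Y(1) Suc.prems(1) by auto
    show ?thesis unfolding parity_block_def SA SB using a Y by auto
  qed
  ultimately show ?case by blast
qed

lemma card_eq_sum_card_Int_partition:
  assumes "partition_on V P" "finite V" "X \<subseteq> V"
  shows "card X = (\<Sum>S\<in>P. card (S \<inter> X))"
proof -
  have "finite P" using assms(1,2) by (rule finite_elements[rotated])
  have fin: "\<forall>S\<in>P. finite (S \<inter> X)" using assms(2,3) by (meson finite_Int finite_subset)
  have dis: "\<forall>S\<in>P. \<forall>S'\<in>P. S \<noteq> S' \<longrightarrow> (S \<inter> X) \<inter> (S' \<inter> X) = {}"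
    using partition_onD2[OF assms(1)] by (auto simp: disjoint_def)
  have "X = (\<Union>S\<in>P. S \<inter> X)" using partition_onD1[OF assms(1)] assms(3) by blast
  then show ?thesis using card_UN_disjoint[OF \<open>finite P\<close> fin dis] by simp
qed

lemma card_parity_blocks:
  assumes "A \<inter> B = {}" "finite A" "finite B" "card A = 6 * m" "card B = 6 * m"
    and "partition_on (A \<union> B) P" "\<forall>S\<in>P. parity_block A B S"
  shows "card {S\<in>P. card (S \<inter> A) = 4} = m" "card {S\<in>P. card (S \<inter> A) = 1} = 2 * m"
proof -
  let ?P4 = "{S\<in>P. card (S \<inter> A) = 4}" and ?P1 = "{S\<in>P. card (S \<inter> A) = 1}"
  have "finite P" using assms(2,3,6) finite_elements by blast
  then have fin: "finite ?P4" "finite ?P1" by simp_all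
  have P4: "\<forall>S\<in>?P4. card (S \<inter> B) = 0" and P1: "\<forall>S\<in>?P1. card (S \<inter> B) = 3"
    using assms(7) unfolding parity_block_def by auto
  have "?P4 \<union> ?P1 = P" using assms(7) unfolding parity_block_def by blast
  then have sum_split: "(\<Sum>S\<in>P. f S) = (\<Sum>S\<in>?P4. f S) + (\<Sum>S\<in>?P1. f S)" for f :: "'a set \<Rightarrow> nat"
    using sum.union_disjoint[OF fin, of f] by force
  have "card B = (\<Sum>S\<in>P. card (S \<inter> B))"
    using card_eq_sum_card_Int_partition assms(2,3,6) by blast
  also have "\<dots> = 3 * card ?P1" unfolding sum_split using P4 P1 by simp
  finally show card_P1: "card ?P1 = 2 * m" using assms(5) by simp
  have "card A = (\<Sum>S\<in>P. card (S \<inter> A))"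
    using card_eq_sum_card_Int_partition assms(2,3,6) by blast
  also have "\<dots> = 4 * card ?P4 + card ?P1" unfolding sum_split by simp
  finally show "card ?P4 = m" using assms(4) card_P1 by simp
qed

lemma partition_on_replace:
  assumes "partition_on V P" "Bs \<subseteq> P" "partition_on (\<Union>Bs) Ns"
  shows "partition_on V ((P - Bs) \<union> Ns)" and "(P - Bs) \<inter> Ns = {}"
proof -
  have dP: "disjoint P" and dN: "disjoint Ns" using assms(1,3) by (auto dest: partition_onD2)
  have outside: "disjnt p q" if "p \<in> P - Bs" "q \<in> Ns" for p q
  proof -
    have "p \<inter> B = {}" if "B \<in> Bs" for B
      using dP \<open>p \<in> P - Bs\<close> that assms(2) by (metis Diff_iff disjointD subsetD)
    moreover have "q \<subseteq> \<Union>Bs" using partition_onD1[OF assms(3)] that(2) by blast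
    ultimately show ?thesis unfolding disjnt_def by blast
  qed
  show "(P - Bs) \<inter> Ns = {}"
  proof -
    have "p = {}" if "p \<in> P - Bs" "p \<in> Ns" for p using outside[OF that] by (simp add: disjnt_def)
    then show ?thesis using partition_onD3[OF assms(3)] by blast
  qed
  show "partition_on V ((P - Bs) \<union> Ns)"
  proof (rule partition_onI)
    have "\<Union>((P - Bs) \<union> Ns) = \<Union>(P - Bs) \<union> \<Union>Bs" using partition_onD1[OF assms(3)] by auto
    also have "\<dots> = V" using partition_onD1[OF assms(1)] assms(2) by blast
    finally show "\<Union>((P - Bs) \<union> Ns) = V" .
  next
    fix p q assume p: "p \<in> (P - Bs) \<union> Ns" and q: "q \<in> (P - Bs) \<union> Ns" and "p \<noteq> q"
    consider "p \<in> P" "q \<in> P" | "p \<in> P - Bs" "q \<in> Ns" | "p \<in> Ns" "q \<in> P - Bs" | "p \<in> Ns" "q \<in> Ns"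
      using p q by blast
    then show "disjnt p q"
    proof cases
      case 1
      then show ?thesis using pairwiseD[OF dP] \<open>p \<noteq> q\<close> by blast
    next
      case 2
      then show ?thesis by (rule outside)
    next
      case 3
      then show ?thesis using outside disjnt_sym by blast
    next
      case 4
      then show ?thesis using pairwiseD[OF dN] \<open>p \<noteq> q\<close> by blast
    qed
  next
    show "{} \<notin> (P - Bs) \<union> Ns" using assms(1,3) partition_onD3 by blast
  qed
qed

lemma partition_on_image_disjoint_family:
  assumes "\<And>i j. i \<in> I \<Longrightarrow> j \<in> I \<Longrightarrow> i \<noteq> j \<Longrightarrow> T i \<inter> T j = {}" "\<And>i. i \<in> I \<Longrightarrow> T i \<noteq> {}"
  shows "partition_on (\<Union>i\<in>I. T i) (T ` I)" and "inj_on T I"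
proof -
  show "inj_on T I" using assms by (metis inf.idem inj_onI)
  show "partition_on (\<Union>i\<in>I. T i) (T ` I)"
  proof (rule partition_onI)
    show "disjnt p q" if "p \<in> T ` I" "q \<in> T ` I" "p \<noteq> q" for p q
      using that assms(1) unfolding disjnt_def by auto
  qed (use assms(2) in auto)
qed

lemma card_filter_less_after_replace:
  assumes "finite P" "finite Ns" "Bs \<subseteq> P" "(P - Bs) \<inter> Ns = {}" "card Bs \<le> card Ns"
    and "\<forall>N\<in>Ns. Q N" "B \<in> Bs" "\<not> Q B"
  shows "card {S\<in>P. Q S} < card {S\<in>(P - Bs) \<union> Ns. Q S}"
proof -
  have fin: "finite Bs" "finite {S\<in>P - Bs. Q S}" using assms(1,3) by (auto intro: finite_subset)
  have "{S\<in>Bs. Q S} \<subset> Bs" using assms(7,8) by blast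
  then have "card {S\<in>Bs. Q S} < card Bs" by (rule psubset_card_mono[OF fin(1)])
  then have less: "card {S\<in>Bs. Q S} < card Ns" using assms(5) by linarith
  have "{S\<in>P. Q S} = {S\<in>P - Bs. Q S} \<union> {S\<in>Bs. Q S}" using assms(3) by blast
  then have "card {S\<in>P. Q S} = card {S\<in>P - Bs. Q S} + card {S\<in>Bs. Q S}"
    using card_Un_disjoint[OF fin(2), of "{S\<in>Bs. Q S}"] fin(1) by auto
  also have "\<dots> < card {S\<in>P - Bs. Q S} + card Ns" using less by simp
  also have "\<dots> = card ({S\<in>P - Bs. Q S} \<union> Ns)"
  proof -
    have "{S\<in>P - Bs. Q S} \<inter> Ns = {}" using assms(4) by blast
    then show ?thesis using card_Un_disjoint[OF fin(2) assms(2)] by simp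
  qed
  also have "{S\<in>P - Bs. Q S} \<union> Ns = {S\<in>(P - Bs) \<union> Ns. Q S}" using assms(6) by auto
  finally show ?thesis .
qed

section \<open>Regrouping four blocks along a Latin square\<close>

lemma mod_add_left_cancel_less:
  fixes j k k' n :: nat
  assumes "(j + k) mod n = (j + k') mod n" "k < n" "k' < n"
  shows "k = k'"
  using assms cong_add_lcancel_nat[of j k k' n] by (simp add: cong_def)

lemma exists_bij_betw_lessThan_Int_first:
  assumes "finite S"
  shows "\<exists>f. bij_betw f {..<card S} S \<and> (\<forall>k<card S. f k \<in> X \<longleftrightarrow> k < card (S \<inter> X))"
proof -
  let ?a = "card (S \<inter> X)"
  have a_le: "?a \<le> card S" by (rule card_mono[OF assms]) auto
  obtain g where g: "bij_betw g {..<?a} (S \<inter> X)"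
    using finite_same_card_bij[of "{..<?a}" "S \<inter> X"] assms by auto
  have "card {?a..<card S} = card (S - X)" using card_Int_Diff[OF assms, of X] by simp
  then obtain h where h: "bij_betw h {?a..<card S} (S - X)"
    using finite_same_card_bij[of "{?a..<card S}" "S - X"] assms by auto
  define f where "f k = (if k < ?a then g k else h k)" for k
  have "bij_betw f {..<?a} (S \<inter> X)" using g by (rule bij_betw_cong[THEN iffD2, rotated]) (simp add: f_def)
  moreover have "bij_betw f {?a..<card S} (S - X)"
    using h by (rule bij_betw_cong[THEN iffD2, rotated]) (simp add: f_def)
  ultimately have "bij_betw f ({..<?a} \<union> {?a..<card S}) ((S \<inter> X) \<union> (S - X))"
    by (rule bij_betw_combine) blast
  moreover have "{..<?a} \<union> {?a..<card S} = {..<card S}" using a_le by auto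
  moreover have "(S \<inter> X) \<union> (S - X) = S" by blast
  ultimately have "bij_betw f {..<card S} S" by simp
  moreover have "f k \<in> X \<longleftrightarrow> k < ?a" if "k < card S" for k
    using bij_betwE[OF g] bij_betwE[OF h] that by (auto simp: f_def)
  ultimately show ?thesis by blast
qed

lemma exists_grid_enumeration:
  assumes "finite Bs" "card Bs = n" "disjoint Bs" "\<forall>B\<in>Bs. card B = n \<and> card (B \<inter> X) = a"
  shows "\<exists>F. inj_on (\<lambda>(i, k). F i k) ({..<n} \<times> {..<n}) \<and> (\<lambda>i. F i ` {..<n}) ` {..<n} = Bs \<and>
    (\<forall>i<n. \<forall>k<n. F i k \<in> X \<longleftrightarrow> k < a)"
proof -
  obtain \<beta> where \<beta>: "bij_betw \<beta> {..<n} Bs" using finite_same_card_bij[of "{..<n}" Bs] assms(1,2) by auto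
  have "\<exists>f. bij_betw f {..<n} (\<beta> i) \<and> (\<forall>k<n. f k \<in> X \<longleftrightarrow> k < a)" if "i \<in> {..<n}" for i
  proof -
    have "\<beta> i \<in> Bs" using bij_betwE[OF \<beta>] that by blast
    moreover have "finite (\<beta> i)" using that calculation assms(4) by (auto intro: card_ge_0_finite)
    ultimately show ?thesis using exists_bij_betw_lessThan_Int_first[of "\<beta> i" X] assms(4) by auto
  qed
  then obtain F where F: "\<forall>i\<in>{..<n}. bij_betw (F i) {..<n} (\<beta> i) \<and> (\<forall>k<n. F i k \<in> X \<longleftrightarrow> k < a)"
    by metis
  have rows: "F i ` {..<n} = \<beta> i" if "i < n" for i using F that by (simp add: bij_betw_def)
  have "inj_on (\<lambda>(i, k). F i k) ({..<n} \<times> {..<n})"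
  proof (rule inj_onI, clarify)
    fix i k i' k' assume idx: "i < n" "k < n" "i' < n" "k' < n" and eq: "F i k = F i' k'"
    have "F i k \<in> \<beta> i \<inter> \<beta> i'" using rows idx eq by blast
    then have "\<beta> i = \<beta> i'" using disjointD[OF assms(3)] bij_betwE[OF \<beta>] idx by blast
    then show "i = i' \<and> k = k'"
      using bij_betw_imp_inj_on[OF \<beta>] bij_betw_imp_inj_on F idx eq by (metis inj_onD lessThan_iff)
  qed
  moreover have "(\<lambda>i. F i ` {..<n}) ` {..<n} = Bs" using rows bij_betw_imp_surj_on[OF \<beta>] by auto
  ultimately show ?thesis using F by blast
qed

lemma latin_square_transversals:
  fixes F :: "nat \<Rightarrow> nat \<Rightarrow> 'a"
  assumes inj: "inj_on (\<lambda>(i, k). F i k) ({..<n} \<times> {..<n})"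
  defines "T j \<equiv> (\<lambda>k. F ((j + k) mod n) k) ` {..<n}"
  shows "(\<Union>j<n. T j) = (\<Union>i<n. F i ` {..<n})"
    and "j < n \<Longrightarrow> j' < n \<Longrightarrow> j \<noteq> j' \<Longrightarrow> T j \<inter> T j' = {}"
    and "card (T j) = n"
    and "i < n \<Longrightarrow> x \<in> T j \<inter> F i ` {..<n} \<Longrightarrow> y \<in> T j \<inter> F i ` {..<n} \<Longrightarrow> x = y"
    and "a \<le> n \<Longrightarrow> \<forall>i<n. \<forall>k<n. F i k \<in> X \<longleftrightarrow> k < a \<Longrightarrow> card (T j \<inter> X) = a"
proof -
  have eq: "F i k = F i' k' \<longleftrightarrow> i = i' \<and> k = k'" if "i < n" "k < n" "i' < n" "k' < n" for i k i' k'
    using inj_onD[OF inj, of "(i, k)" "(i', k')"] that by auto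
  have T_inj: "inj_on (\<lambda>k. F ((j + k) mod n) k) {..<n}"
    by (rule inj_onI) (use eq in \<open>auto dest: gr_implies_not0\<close>)
  have "F i k \<in> T ((i + (n - k)) mod n)" if "i < n" "k < n" for i k
  proof -
    have "((i + (n - k)) mod n + k) mod n = (i + n) mod n" using that by (simp add: mod_add_left_eq)
    then show ?thesis using that unfolding T_def by (intro image_eqI[of _ _ k]) auto
  qed
  then show "(\<Union>j<n. T j) = (\<Union>i<n. F i ` {..<n})" unfolding T_def by fastforce
  show "T j \<inter> T j' = {}" if "j < n" "j' < n" "j \<noteq> j'"
  proof -
    have "(k + j) mod n \<noteq> (k + j') mod n" for k
      using mod_add_left_cancel_less that by blast
    then show ?thesis unfolding T_def using eq by (auto simp: add.commute)
  qed
  show "card (T j) = n" unfolding T_def using T_inj by (simp add: card_image)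
  show "x = y" if i: "i < n" and xy: "x \<in> T j \<inter> F i ` {..<n}" "y \<in> T j \<inter> F i ` {..<n}"
  proof -
    obtain k k' p p' where idx: "k < n" "k' < n" "p < n" "p' < n"
      and x: "x = F ((j + k) mod n) k" "x = F i p" and y: "y = F ((j + k') mod n) k'" "y = F i p'"
      using xy unfolding T_def by auto
    have "n \<noteq> 0" using idx by simp
    then have "(j + k) mod n = i" "(j + k') mod n = i" using eq x y idx i by auto
    then have "k = k'" using mod_add_left_cancel_less idx by metis
    then show "x = y" using x y by simp
  qed
  show "card (T j \<inter> X) = a" if "a \<le> n" "\<forall>i<n. \<forall>k<n. F i k \<in> X \<longleftrightarrow> k < a"
  proof -
    have "k < n \<Longrightarrow> (j + k) mod n < n" for k by simp
    then have "T j \<inter> X = (\<lambda>k. F ((j + k) mod n) k) ` {..<a}" using that unfolding T_def by auto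
    then show ?thesis using inj_on_subset[OF T_inj, of "{..<a}"] that(1) by (simp add: card_image)
  qed
qed

lemma spans_no_edge_if_meets_blocks_at_most_once:
  assumes "no_edge_meets_three M Bs" "\<forall>e\<in>M. card e = 3" "N \<subseteq> \<Union>Bs"
    and "\<forall>X\<in>Bs. \<forall>x\<in>N \<inter> X. \<forall>y\<in>N \<inter> X. x = y"
  shows "spans_no_edge M N"
  unfolding spans_no_edge_def
proof (intro ballI notI)
  fix e assume "e \<in> M" "e \<subseteq> N"
  then obtain x y z where e: "e = {x, y, z}" "x \<noteq> y" "x \<noteq> z" "y \<noteq> z"
    using assms(2) by (auto simp: card_3_iff)
  then have N: "x \<in> N" "y \<in> N" "z \<in> N" using \<open>e \<subseteq> N\<close> by auto
  obtain X where X: "X \<in> Bs" "x \<in> X" using N(1) assms(3) by blast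
  obtain Y where Y: "Y \<in> Bs" "y \<in> Y" using N(2) assms(3) by blast
  obtain Z where Z: "Z \<in> Bs" "z \<in> Z" using N(3) assms(3) by blast
  note XYZ = X(1) Y(1) Z(1) X(2) Y(2) Z(2)
  have once: "u = v" if "X' \<in> Bs" "u \<in> N" "v \<in> N" "u \<in> X'" "v \<in> X'" for X' u v
    using assms(4) that by blast
  have "X \<noteq> Y" "X \<noteq> Z" "Y \<noteq> Z" using once[of X x y] once[of X x z] once[of Y y z] N XYZ e by auto
  then have "e \<inter> X = {} \<or> e \<inter> Y = {} \<or> e \<inter> Z = {}"
    using assms(1) \<open>e \<in> M\<close> XYZ(1-3) unfolding no_edge_meets_three_def by blast
  then show False using XYZ(4-6) e(1) by blast
qed

lemma exists_transversal_partition: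
  assumes "finite Bs" "card Bs = n" "disjoint Bs" "\<forall>B\<in>Bs. card B = n \<and> card (B \<inter> X) = a"
    and "\<forall>e\<in>M. card e = 3" "no_edge_meets_three M Bs"
  shows "\<exists>Ns. partition_on (\<Union>Bs) Ns \<and> card Ns = n \<and>
    (\<forall>N\<in>Ns. card N = n \<and> card (N \<inter> X) = a \<and> spans_no_edge M N)"
proof (cases "n = 0")
  case True
  then have "Bs = {}" using assms(1,2) by simp
  then show ?thesis using True by (auto simp: partition_on_empty)
next
  case False
  obtain F where inj: "inj_on (\<lambda>(i, k). F i k) ({..<n} \<times> {..<n})"
    and rows: "(\<lambda>i. F i ` {..<n}) ` {..<n} = Bs" and cols: "\<forall>i<n. \<forall>k<n. F i k \<in> X \<longleftrightarrow> k < a"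
    using exists_grid_enumeration[OF assms(1-4)] by blast
  have "a \<le> n"
  proof -
    obtain B where B: "B \<in> Bs" using False assms(2) by fastforce
    then have "finite B" using assms(4) False by (intro card_ge_0_finite) simp
    then show ?thesis using B assms(4) card_mono[of B "B \<inter> X"] by force
  qed
  define T where "T j = (\<lambda>k. F ((j + k) mod n) k) ` {..<n}" for j
  note latin = latin_square_transversals[OF inj, folded T_def]
  have cover: "(\<Union>j<n. T j) = \<Union>Bs" using latin(1) rows by auto
  have T_ne: "T j \<noteq> {}" for j using latin(3)[of j] False by auto
  have T_free: "spans_no_edge M (T j)" if "j < n" for j
  proof (rule spans_no_edge_if_meets_blocks_at_most_once[OF assms(6,5)])
    show "T j \<subseteq> \<Union>Bs" using cover that by blast
    show "\<forall>B\<in>Bs. \<forall>x\<in>T j \<inter> B. \<forall>y\<in>T j \<inter> B. x = y" using latin(4) rows by blast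
  qed
  have "partition_on (\<Union>Bs) (T ` {..<n})" "inj_on T {..<n}"
    using partition_on_image_disjoint_family[of "{..<n}" T] latin(2) T_ne cover by auto
  then show ?thesis using latin(3) latin(5)[OF \<open>a \<le> n\<close> cols] T_free by (intro exI[of _ "T ` {..<n}"]) (auto simp: card_image)
qed

section \<open>Counting crossing edges\<close>

lemma card_filter_eq_sum:
  "finite A \<Longrightarrow> card {x\<in>A. P x} = (\<Sum>x\<in>A. if P x then 1 else 0)"
  using sum.inter_filter[of A "\<lambda>_. 1::nat" P] by simp

lemma card_blocks_meeting_le:
  assumes "disjoint C" "finite e"
  shows "card {T\<in>C. T \<inter> e \<noteq> {}} \<le> card (e \<inter> \<Union>C)"
proof -
  let ?C = "{T\<in>C. T \<inter> e \<noteq> {}}"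
  define g where "g T = (SOME x. x \<in> T \<inter> e)" for T
  have g: "g T \<in> T \<inter> e" if "T \<in> ?C" for T
  proof -
    have "\<exists>x. x \<in> T \<inter> e" using that by blast
    then show ?thesis unfolding g_def by (rule someI_ex)
  qed
  have "inj_on g ?C"
  proof (rule inj_onI)
    fix T T' assume T: "T \<in> ?C" "T' \<in> ?C" "g T = g T'"
    then have "g T \<in> T \<inter> T'" using g[OF T(1)] g[OF T(2)] by simp
    then show "T = T'" using disjointD[OF assms(1), of T T'] T(1,2) by blast
  qed
  moreover have "g ` ?C \<subseteq> e \<inter> \<Union>C" unfolding image_subset_iff using g by blast
  ultimately show ?thesis by (rule card_inj_on_le) (use assms(2) in simp)
qed

lemma sum_card_edges_meeting_le:
  assumes "disjoint C" "finite C" "finite E" "\<forall>e\<in>E. finite e \<and> card (e \<inter> \<Union>C) \<le> k"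
  shows "(\<Sum>T\<in>C. card {e\<in>E. e \<inter> T \<noteq> {}}) \<le> k * card E"
proof -
  have "(\<Sum>T\<in>C. card {e\<in>E. e \<inter> T \<noteq> {}}) = (\<Sum>T\<in>C. \<Sum>e\<in>E. if T \<inter> e \<noteq> {} then 1 else 0)"
    using assms(3) by (simp add: card_filter_eq_sum Int_commute)
  also have "\<dots> = (\<Sum>e\<in>E. card {T\<in>C. T \<inter> e \<noteq> {}})"
    using assms(2) by (simp add: sum.swap[of _ C] card_filter_eq_sum)
  also have "\<dots> \<le> (\<Sum>e\<in>E. k)"
    using card_blocks_meeting_le[OF assms(1)] assms(4) by (intro sum_mono) (meson order_trans)
  finally show ?thesis by (simp add: mult.commute)
qed

lemma card_blocks_hit_le:
  assumes "disjoint C" "finite C" "finite E" "\<forall>e\<in>E. finite e \<and> card (e \<inter> \<Union>C) \<le> k"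
  shows "card {T\<in>C. \<exists>e\<in>E. e \<inter> T \<noteq> {}} \<le> k * card E"
proof -
  let ?H = "{T\<in>C. \<exists>e\<in>E. e \<inter> T \<noteq> {}}"
  have "card ?H = (\<Sum>T\<in>?H. 1)" by simp
  also have "\<dots> \<le> (\<Sum>T\<in>?H. card {e\<in>E. e \<inter> T \<noteq> {}})"
    using assms(3) by (intro sum_mono) (auto simp: Suc_le_eq card_gt_0_iff)
  also have "\<dots> \<le> (\<Sum>T\<in>C. card {e\<in>E. e \<inter> T \<noteq> {}})"
    using assms(2) by (intro sum_mono2) auto
  also have "\<dots> \<le> k * card E" by (rule sum_card_edges_meeting_le[OF assms])
  finally show ?thesis .
qed

lemma card_edges_meeting_le:
  assumes "finite X" "\<forall>x\<in>X. real (card {e\<in>M. x \<in> e}) \<le> D"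
  shows "real (card {e\<in>M. e \<inter> X \<noteq> {}}) \<le> real (card X) * D"
proof -
  have "{e\<in>M. e \<inter> X \<noteq> {}} = (\<Union>x\<in>X. {e\<in>M. x \<in> e})" by blast
  then have "card {e\<in>M. e \<inter> X \<noteq> {}} \<le> (\<Sum>x\<in>X. card {e\<in>M. x \<in> e})"
    using card_UN_le[OF assms(1)] by simp
  then have "real (card {e\<in>M. e \<inter> X \<noteq> {}}) \<le> real (\<Sum>x\<in>X. card {e\<in>M. x \<in> e})"
    by (simp only: of_nat_le_iff)
  also have "\<dots> = (\<Sum>x\<in>X. real (card {e\<in>M. x \<in> e}))" by simp
  also have "\<dots> \<le> (\<Sum>x\<in>X. D)" using assms(2) by (intro sum_mono) blast
  finally show ?thesis by simp
qed

lemma obtain_light_member: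
  fixes f :: "'b \<Rightarrow> nat"
  assumes "finite C" "S \<subseteq> C" "real (\<Sum>T\<in>C. f T) \<le> s" "t > 0" "real (card S) + s / t < real (card C)"
  obtains T where "T \<in> C" "T \<notin> S" "real (f T) \<le> t"
proof -
  have "\<exists>T\<in>C - S. real (f T) \<le> t"
  proof (rule ccontr)
    assume "\<not> ?thesis"
    then have "(\<Sum>T\<in>C - S. t) \<le> (\<Sum>T\<in>C - S. real (f T))" by (intro sum_mono) force
    also have "\<dots> \<le> (\<Sum>T\<in>C. real (f T))" using assms(1) by (intro sum_mono2) auto
    also have "\<dots> \<le> s" using assms(3) by simp
    finally have "t * (real (card C) - real (card S)) \<le> s"
      using assms(1,2) by (simp add: card_Diff_subset finite_subset of_nat_diff card_mono mult.commute)
    then have "real (card C) - real (card S) \<le> s / t" using assms(4) by (simp add: pos_le_divide_eq mult.commute)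
    then show False using assms(5) by linarith
  qed
  then show thesis using that by blast
qed

lemma obtain_block_few_crossing_edges:
  assumes "disjoint C" "finite C" "\<forall>T\<in>C. T \<inter> X = {}" "finite M" "\<forall>e\<in>M. card e = 3"
    and "finite X" "\<forall>x\<in>X. real (card {e\<in>M. x \<in> e}) \<le> D" "S \<subseteq> C" "t > 0"
    and "real (card S) + 2 * real (card X) * D / t < real (card C)"
  obtains T where "T \<in> C" "T \<notin> S" "real (card (crossing_edges M X T)) \<le> t"
proof -
  let ?E = "{e\<in>M. e \<inter> X \<noteq> {}}"
  have small: "finite e \<and> card (e \<inter> \<Union>C) \<le> 2" if E: "e \<in> ?E" for e
  proof -
    have e: "finite e" "card e = 3" "e \<inter> X \<noteq> {}" using E assms(5) by (auto intro: card_ge_0_finite)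
    then have "1 \<le> card (e \<inter> X)" by (simp add: Suc_le_eq card_gt_0_iff)
    then have "card (e - X) \<le> 2" using card_Int_Diff[OF e(1), of X] e(2) by linarith
    moreover have "card (e \<inter> \<Union>C) \<le> card (e - X)" using assms(3) e(1) by (intro card_mono) auto
    ultimately show ?thesis using e(1) by linarith
  qed
  have "(\<Sum>T\<in>C. card {e\<in>?E. e \<inter> T \<noteq> {}}) \<le> 2 * card ?E"
    using small assms(4) by (intro sum_card_edges_meeting_le[OF assms(1,2)]) auto
  moreover have "{e\<in>?E. e \<inter> T \<noteq> {}} = crossing_edges M X T" for T
    unfolding crossing_edges_def by auto
  ultimately have "real (\<Sum>T\<in>C. card (crossing_edges M X T)) \<le> real (2 * card ?E)"
    by (simp only: of_nat_le_iff)
  also have "\<dots> \<le> 2 * real (card X) * D" using card_edges_meeting_le[OF assms(6,7)] by simp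
  finally show thesis using obtain_light_member[OF assms(2,8) _ assms(9,10)] that by blast
qed

lemma card_crossed_blocks_le:
  assumes "disjoint C" "finite C" "\<forall>T\<in>C. T \<inter> (X \<union> Y) = {}" "X \<inter> Y = {}"
    and "finite M" "\<forall>e\<in>M. card e = 3"
  shows "card (crossed_blocks M C X Y) \<le> card (crossing_edges M X Y)"
proof -
  have "finite e \<and> card (e \<inter> \<Union>C) \<le> 1" if E: "e \<in> crossing_edges M X Y" for e
  proof -
    obtain x y where xy: "x \<in> e \<inter> X" "y \<in> e \<inter> Y" using E unfolding crossing_edges_def by blast
    have e: "finite e" "card e = 3" using E assms(6) unfolding crossing_edges_def
      by (auto intro: card_ge_0_finite)
    have "x \<noteq> y" using xy assms(4) by blast
    then have "card (e - {x, y}) = 1" using e xy by (simp add: card_Diff_subset)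
    moreover have "e \<inter> \<Union>C \<subseteq> e - {x, y}" using assms(3) xy by blast
    ultimately show ?thesis using card_mono[OF _ \<open>e \<inter> \<Union>C \<subseteq> e - {x, y}\<close>] e(1) by force
  qed
  then have "card (crossed_blocks M C X Y) \<le> 1 * card (crossing_edges M X Y)"
    unfolding crossed_blocks_def using assms(5)
    by (intro card_blocks_hit_le[OF assms(1,2)]) (auto simp: crossing_edges_def)
  then show ?thesis by simp
qed

lemma no_edge_meets_three_fourI:
  assumes "\<forall>e\<in>M. e \<inter> B0 = {} \<or> e \<inter> B1 = {} \<or> e \<inter> B2 = {}"
    and "\<forall>e\<in>M. e \<inter> B0 = {} \<or> e \<inter> B1 = {} \<or> e \<inter> B3 = {}"
    and "\<forall>e\<in>M. e \<inter> (B0 \<union> B1) = {} \<or> e \<inter> B2 = {} \<or> e \<inter> B3 = {}"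
  shows "no_edge_meets_three M {B0, B1, B2, B3}"
  unfolding no_edge_meets_three_def
proof (intro ballI impI)
  fix e X Y Z assume e: "e \<in> M" and XYZ: "X \<in> {B0, B1, B2, B3}" "Y \<in> {B0, B1, B2, B3}" "Z \<in> {B0, B1, B2, B3}"
    and dist: "X \<noteq> Y \<and> X \<noteq> Z \<and> Y \<noteq> Z"
  \<comment> \<open>Hiding \<open>e \<inter> B = {}\<close> behind a predicate keeps the case split over X, Y, Z propositional.\<close>
  define misses where "misses B \<longleftrightarrow> e \<inter> B = {}" for B
  have "misses B0 \<or> misses B1 \<or> misses B2" "misses B0 \<or> misses B1 \<or> misses B3"
    "misses B0 \<and> misses B1 \<or> misses B2 \<or> misses B3"
    using assms e unfolding misses_def by (auto simp: Int_Un_distrib)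
  with XYZ dist have "misses X \<or> misses Y \<or> misses Z" by blast
  then show "e \<inter> X = {} \<or> e \<inter> Y = {} \<or> e \<inter> Z = {}" unfolding misses_def .
qed

lemma disjoint_Diff_blocks:
  assumes "disjoint C" "finite C" "Bs \<subseteq> C"
  shows "disjoint (C - Bs)" "card (C - Bs) = card C - card Bs" "\<forall>T\<in>C - Bs. T \<inter> \<Union>Bs = {}"
proof -
  show "disjoint (C - Bs)" using assms(1) by (rule pairwise_subset) blast
  show "card (C - Bs) = card C - card Bs" using assms(2,3) by (simp add: card_Diff_subset finite_subset)
  show "\<forall>T\<in>C - Bs. T \<inter> \<Union>Bs = {}"
  proof
    fix T assume T: "T \<in> C - Bs"
    have "T \<inter> B = {}" if "B \<in> Bs" for B using disjointD[OF assms(1), of T B] T that assms(3) by blast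
    then show "T \<inter> \<Union>Bs = {}" by blast
  qed
qed

(* The threshold c/4, for c = card C, makes the averaging in each step succeed as soon as
   100 D \<le> c\<^sup>2 and c \<ge> 10. *)
lemma obtain_two_blocks_few_crossing_edges:
  assumes C: "disjoint C" "finite C" "\<forall>T\<in>C. card T = 4 \<and> T \<inter> B0 = {}" "card B0 = 4"
    and M: "finite M" "\<forall>e\<in>M. card e = 3" "\<forall>v\<in>B0 \<union> \<Union>C. real (card {e\<in>M. v \<in> e}) \<le> D"
    and c: "10 \<le> card C" "100 * D \<le> real (card C) ^ 2"
  obtains B1 B2 where "B1 \<in> C" "B2 \<in> C - {B1}" "B2 \<notin> crossed_blocks M (C - {B1}) B0 B1"
    "real (card (crossing_edges M B0 B1)) \<le> real (card C) / 4"
    "real (card (crossing_edges M (B0 \<union> B1) B2)) \<le> real (card C) / 4"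
proof -
  define c where "c = real (card C)"
  have "10 \<le> c" "100 * D \<le> c\<^sup>2" using c unfolding c_def by simp_all
  moreover have "100 \<le> c\<^sup>2" using power_mono[of 10 c 2] calculation(1) by simp
  ultimately have D: "64 * D \<le> 16 / 25 * c\<^sup>2" "32 * D < c\<^sup>2" "10 \<le> c" "c / 4 > 0" by linarith+
  have fin: "finite T" if "T \<in> insert B0 C" for T
    using that C(3,4) by (auto intro: card_ge_0_finite)
  have deg: "\<forall>x\<in>X. real (card {e\<in>M. x \<in> e}) \<le> D" if "X \<subseteq> B0 \<union> \<Union>C" for X
    using M(3) that by blast
  have sep0: "\<forall>T\<in>C. T \<inter> B0 = {}" using C(3) by blast
  have "real (card {}) + 2 * real (card B0) * D / (c / 4) < real (card C)"
    using D(2,3) C(4) unfolding c_def[symmetric] by (simp add: field_simps power2_eq_square)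
  with obtain_block_few_crossing_edges[OF C(1,2) sep0 M(1,2) fin[of B0] deg[of B0] empty_subsetI D(4)]
  obtain B1 where B1: "B1 \<in> C" "real (card (crossing_edges M B0 B1)) \<le> c / 4"
    by blast
  let ?C1 = "C - {B1}"
  have C1: "disjoint ?C1" "real (card ?C1) = c - 1" "\<forall>T\<in>?C1. T \<inter> (B0 \<union> B1) = {}"
    using disjoint_Diff_blocks[OF C(1,2), of "{B1}"] B1(1) c(1) sep0 unfolding c_def
    by (auto simp: of_nat_diff)
  have "finite ?C1" using C(2) by simp
  have "B0 \<inter> B1 = {}" using sep0 B1(1) by blast
  then have "card (B0 \<union> B1) = 8" using fin[of B0] fin[of B1] C(3,4) B1(1) by (simp add: card_Un_disjoint)
  have "card (crossed_blocks M ?C1 B0 B1) \<le> card (crossing_edges M B0 B1)"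
    by (rule card_crossed_blocks_le[OF C1(1) \<open>finite ?C1\<close> C1(3) \<open>B0 \<inter> B1 = {}\<close> M(1,2)])
  moreover have "2 * real (card (B0 \<union> B1)) * D / (c / 4) \<le> 16 / 25 * c"
    using D(1,3) \<open>card (B0 \<union> B1) = 8\<close> by (simp add: field_simps power2_eq_square)
  ultimately have "real (card (crossed_blocks M ?C1 B0 B1)) + 2 * real (card (B0 \<union> B1)) * D / (c / 4)
      < real (card ?C1)"
    using B1(2) C1(2) D(3) by linarith
  moreover have "crossed_blocks M ?C1 B0 B1 \<subseteq> ?C1" "finite (B0 \<union> B1)" "B0 \<union> B1 \<subseteq> B0 \<union> \<Union>C"
    using fin[of B0] fin[of B1] B1(1) unfolding crossed_blocks_def by auto
  ultimately obtain B2 where "B2 \<in> ?C1" "B2 \<notin> crossed_blocks M ?C1 B0 B1"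
    "real (card (crossing_edges M (B0 \<union> B1) B2)) \<le> c / 4"
    using obtain_block_few_crossing_edges[OF C1(1) \<open>finite ?C1\<close> C1(3) M(1,2), of D "crossed_blocks M ?C1 B0 B1" "c / 4"]
      deg[of "B0 \<union> B1"] D(4) by blast
  then show thesis using that B1 unfolding c_def by blast
qed

lemma obtain_three_blocks_no_edge_meets_three:
  assumes C: "disjoint C" "finite C" "\<forall>T\<in>C. card T = 4 \<and> T \<inter> B0 = {}" "card B0 = 4"
    and M: "finite M" "\<forall>e\<in>M. card e = 3" "\<forall>v\<in>B0 \<union> \<Union>C. real (card {e\<in>M. v \<in> e}) \<le> D"
    and c: "10 \<le> card C" "100 * D \<le> real (card C) ^ 2"
  obtains B1 B2 B3 where "B1 \<in> C" "B2 \<in> C" "B3 \<in> C" "B1 \<noteq> B2" "B1 \<noteq> B3" "B2 \<noteq> B3"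
    "no_edge_meets_three M {B0, B1, B2, B3}"
proof -
  obtain B1 B2 where B1: "B1 \<in> C" "real (card (crossing_edges M B0 B1)) \<le> real (card C) / 4"
    and B2: "B2 \<in> C - {B1}" "B2 \<notin> crossed_blocks M (C - {B1}) B0 B1"
      "real (card (crossing_edges M (B0 \<union> B1) B2)) \<le> real (card C) / 4"
    using obtain_two_blocks_few_crossing_edges[OF C M c] by blast
  have "B1 \<noteq> B2" "B2 \<in> C" using B2(1) by blast+
  let ?C2 = "C - {B1, B2}"
  have "{B1, B2} \<subseteq> C" "card {B1, B2} = 2" using B1(1) \<open>B2 \<in> C\<close> \<open>B1 \<noteq> B2\<close> by simp_all
  then have C2: "disjoint ?C2" "real (card ?C2) = real (card C) - 2" "\<forall>T\<in>?C2. T \<inter> (B1 \<union> B2) = {}"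
    using disjoint_Diff_blocks[OF C(1,2), of "{B1, B2}"] c(1) by (auto simp: of_nat_diff)
  have "finite ?C2" using C(2) by simp
  have sep: "\<forall>T\<in>?C2. T \<inter> (B0 \<union> B1) = {}" "\<forall>T\<in>?C2. T \<inter> ((B0 \<union> B1) \<union> B2) = {}"
    using C2(3) C(3) by blast+
  have disj: "B0 \<inter> B1 = {}" "(B0 \<union> B1) \<inter> B2 = {}"
    using C(3) B1(1) \<open>B2 \<in> C\<close> disjointD[OF C(1) B1(1) \<open>B2 \<in> C\<close> \<open>B1 \<noteq> B2\<close>] by blast+
  let ?X = "crossed_blocks M ?C2 B0 B1 \<union> crossed_blocks M ?C2 (B0 \<union> B1) B2"
  have "card (crossed_blocks M ?C2 B0 B1) \<le> card (crossing_edges M B0 B1)"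
    "card (crossed_blocks M ?C2 (B0 \<union> B1) B2) \<le> card (crossing_edges M (B0 \<union> B1) B2)"
    using card_crossed_blocks_le[OF C2(1) \<open>finite ?C2\<close> sep(1) disj(1) M(1,2)]
      card_crossed_blocks_le[OF C2(1) \<open>finite ?C2\<close> sep(2) disj(2) M(1,2)] .
  then have "card ?X < card ?C2"
    using card_Un_le[of "crossed_blocks M ?C2 B0 B1" "crossed_blocks M ?C2 (B0 \<union> B1) B2"] B1(2) B2(3) C2(2) c(1)
    by linarith
  moreover have "?X \<subseteq> ?C2" unfolding crossed_blocks_def by blast
  ultimately obtain B3 where B3: "B3 \<in> ?C2" "B3 \<notin> ?X" by (metis less_irrefl subsetI subset_antisym)
  have "no_edge_meets_three M {B0, B1, B2, B3}"
  proof (rule no_edge_meets_three_fourI)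
    show "\<forall>e\<in>M. e \<inter> B0 = {} \<or> e \<inter> B1 = {} \<or> e \<inter> B2 = {}"
      using B2(1,2) by (simp add: crossed_blocks_def crossing_edges_def)
    show "\<forall>e\<in>M. e \<inter> B0 = {} \<or> e \<inter> B1 = {} \<or> e \<inter> B3 = {}"
      using B3 by (simp add: crossed_blocks_def crossing_edges_def)
    show "\<forall>e\<in>M. e \<inter> (B0 \<union> B1) = {} \<or> e \<inter> B2 = {} \<or> e \<inter> B3 = {}"
      using B3 by (simp add: crossed_blocks_def crossing_edges_def)
  qed
  moreover have "B3 \<in> C" "B3 \<noteq> B1" "B3 \<noteq> B2" using B3(1) by simp_all
  ultimately show thesis using that[OF B1(1) \<open>B2 \<in> C\<close>] \<open>B1 \<noteq> B2\<close> by metis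
qed

section \<open>Absorbing the non-free blocks\<close>

lemma obtain_same_shape_blocks:
  assumes AB: "A \<inter> B = {}" "finite A" "finite B" "card A = 6 * m" "card B = 6 * m" "11 \<le> m"
    and P: "partition_on (A \<union> B) P" "\<forall>S\<in>P. parity_block A B S"
    and M: "finite M" "\<forall>e\<in>M. card e = 3" "\<forall>v\<in>A \<union> B. real (card {e\<in>M. v \<in> e}) \<le> D"
    and D: "100 * D \<le> (real m - 1)\<^sup>2" and S0: "S0 \<in> P"
  obtains Bs where "S0 \<in> Bs" "Bs \<subseteq> P" "card Bs = 4" "\<forall>B\<in>Bs. card (B \<inter> A) = card (S0 \<inter> A)"
    "no_edge_meets_three M Bs"
proof -
  have finP: "finite P" using P(1) AB(2,3) finite_elements by blast
  have dP: "disjoint P" using P(1) by (rule partition_onD2)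
  have card4: "card T = 4" if "T \<in> P" for T using card_parity_block P(2) that AB(1-3) by blast
  define C where "C = {T\<in>P. card (T \<inter> A) = card (S0 \<inter> A)} - {S0}"
  have C: "S0 \<notin> C" "finite C" "C \<subseteq> P" using finP unfolding C_def by auto
  have "m \<le> card {T\<in>P. card (T \<inter> A) = card (S0 \<inter> A)}"
    using card_parity_blocks[OF AB(1-5) P] P(2) S0 unfolding parity_block_def by auto
  then have "m - 1 \<le> card C" using finP S0 unfolding C_def by (simp add: card_Diff_singleton)
  then have C_large: "real m - 1 \<le> real (card C)" "10 \<le> card C" using AB(6) by linarith+
  then have "(real m - 1)\<^sup>2 \<le> real (card C) ^ 2" using AB(6) by (intro power_mono) auto
  then have D': "100 * D \<le> real (card C) ^ 2" using D by linarith
  have "disjoint C" using dP C(3) by (rule pairwise_subset)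
  moreover have "\<forall>T\<in>C. card T = 4 \<and> T \<inter> S0 = {}"
  proof
    fix T assume "T \<in> C"
    then have "T \<in> P" "T \<noteq> S0" using C(1,3) by blast+
    then show "card T = 4 \<and> T \<inter> S0 = {}" using card4 disjointD[OF dP _ S0] by blast
  qed
  moreover have "\<forall>v\<in>S0 \<union> \<Union>C. real (card {e\<in>M. v \<in> e}) \<le> D"
  proof -
    have "S0 \<union> \<Union>C \<subseteq> \<Union>P" using S0 C(3) by blast
    then show ?thesis using M(3) partition_onD1[OF P(1)] by blast
  qed
  ultimately obtain B1 B2 B3 where Bi: "B1 \<in> C" "B2 \<in> C" "B3 \<in> C" "B1 \<noteq> B2" "B1 \<noteq> B3" "B2 \<noteq> B3"
    and meets: "no_edge_meets_three M {S0, B1, B2, B3}"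
    by (rule obtain_three_blocks_no_edge_meets_three[OF _ C(2) _ card4[OF S0] M(1,2) _ C_large(2) D'])
  have "S0 \<noteq> B1" "S0 \<noteq> B2" "S0 \<noteq> B3" using Bi(1-3) C(1) by metis+
  then have "card {S0, B1, B2, B3} = 4" using Bi(4-6) by simp
  moreover have "{S0, B1, B2, B3} \<subseteq> P" using Bi(1-3) C(3) S0 by (simp add: subset_iff)
  moreover have "\<forall>B\<in>{S0, B1, B2, B3}. card (B \<inter> A) = card (S0 \<inter> A)"
    using Bi(1-3) unfolding C_def by simp
  ultimately show thesis using that[of "{S0, B1, B2, B3}"] meets by simp
qed

lemma exists_regrouped_partition:
  assumes AB: "A \<inter> B = {}" "finite A" "finite B"
    and P: "partition_on (A \<union> B) P" "\<forall>S\<in>P. parity_block A B S" and "\<forall>e\<in>M. card e = 3"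
    and Bs: "S0 \<in> Bs" "Bs \<subseteq> P" "card Bs = 4" "\<forall>B\<in>Bs. card (B \<inter> A) = card (S0 \<inter> A)"
      "no_edge_meets_three M Bs"
    and "\<not> spans_no_edge M S0"
  shows "\<exists>P'. partition_on (A \<union> B) P' \<and> (\<forall>S\<in>P'. parity_block A B S) \<and>
    card {S\<in>P. spans_no_edge M S} < card {S\<in>P'. spans_no_edge M S}"
proof -
  have card4: "card T = 4" if "T \<in> P" for T using card_parity_block P(2) that AB(1-3) by blast
  have S0P: "S0 \<in> P" using Bs(1,2) by blast
  have "finite Bs" using Bs(3) by (intro card_ge_0_finite) simp
  moreover have "disjoint Bs" using partition_onD2[OF P(1)] Bs(2) by (rule pairwise_subset)
  moreover have "\<forall>B\<in>Bs. card B = 4 \<and> card (B \<inter> A) = card (S0 \<inter> A)" using Bs(2,4) card4 by blast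
  ultimately obtain Ns where Ns: "partition_on (\<Union>Bs) Ns" "card Ns = 4"
    and Ns_blocks: "\<forall>N\<in>Ns. card N = 4 \<and> card (N \<inter> A) = card (S0 \<inter> A) \<and> spans_no_edge M N"
    using exists_transversal_partition[OF _ Bs(3) _ _ assms(6) Bs(5)] by blast
  have "\<Union>Bs \<subseteq> A \<union> B" using Bs(2) partition_onD1[OF P(1)] by blast
  have "parity_block A B N" if "N \<in> Ns" for N
  proof (rule parity_block_if_same_profile[OF AB P(2)[rule_format, OF S0P]])
    show "N \<subseteq> A \<union> B"
      using Union_upper[OF that] partition_onD1[OF Ns(1)] \<open>\<Union>Bs \<subseteq> A \<union> B\<close> by blast
    show "card N = card S0" "card (N \<inter> A) = card (S0 \<inter> A)" using Ns_blocks that card4[OF S0P] by auto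
  qed
  moreover have "partition_on (A \<union> B) ((P - Bs) \<union> Ns)" "(P - Bs) \<inter> Ns = {}"
    using partition_on_replace[OF P(1) Bs(2) Ns(1)] by blast+
  moreover have "card {S\<in>P. spans_no_edge M S} < card {S\<in>(P - Bs) \<union> Ns. spans_no_edge M S}"
  proof (rule card_filter_less_after_replace[where Q = "spans_no_edge M", OF _ _ Bs(2) _ _ _ Bs(1)])
    show "finite P" using P(1) AB(2,3) finite_elements by blast
    show "finite Ns" using Ns(2) by (intro card_ge_0_finite) simp
  qed (use Bs(3) Ns(2) Ns_blocks \<open>(P - Bs) \<inter> Ns = {}\<close> assms(12) in auto)
  ultimately show ?thesis using P(2) by (intro exI[of _ "(P - Bs) \<union> Ns"]) blast
qed

lemma exists_free_parity_block_partition: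
  assumes "A \<inter> B = {}" "finite A" "finite B" "card A = 6 * m" "card B = 6 * m" "11 \<le> m"
    and "finite M" "\<forall>e\<in>M. card e = 3" "\<forall>v\<in>A \<union> B. real (card {e\<in>M. v \<in> e}) \<le> D"
    and "100 * D \<le> (real m - 1)\<^sup>2"
  shows "\<exists>P. partition_on (A \<union> B) P \<and> (\<forall>S\<in>P. parity_block A B S \<and> spans_no_edge M S)"
proof -
  let ?admissible = "\<lambda>P. partition_on (A \<union> B) P \<and> (\<forall>S\<in>P. parity_block A B S)"
  let ?free = "\<lambda>P. card {S\<in>P. spans_no_edge M S}"
  have "card A = 4 * m + 2 * m" "card B = 3 * (2 * m)" using assms(4,5) by simp_all
  then obtain P0 where P0: "?admissible P0" using exists_parity_block_partition[OF assms(1-3)] by blast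
  have bounded: "\<forall>P. ?admissible P \<longrightarrow> ?free P < Suc (card (Pow (A \<union> B)))"
  proof (intro allI impI)
    fix P assume "?admissible P"
    then have "{S\<in>P. spans_no_edge M S} \<subseteq> Pow (A \<union> B)" unfolding partition_on_def by blast
    then show "?free P < Suc (card (Pow (A \<union> B)))"
      using assms(2,3) by (simp add: card_mono less_Suc_eq_le)
  qed
  obtain P where "?admissible P \<and> (\<forall>P'. ?admissible P' \<longrightarrow> ?free P' \<le> ?free P)"
    using ex_has_greatest_nat[of ?admissible P0 ?free, OF P0 bounded] by (rule exE)
  then have P: "?admissible P" and max: "\<forall>P'. ?admissible P' \<longrightarrow> ?free P' \<le> ?free P" by simp_all
  have "spans_no_edge M S" if S: "S \<in> P" for S
  proof (rule ccontr)
    assume "\<not> spans_no_edge M S"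
    obtain Bs where "S \<in> Bs" "Bs \<subseteq> P" "card Bs = 4" "\<forall>B\<in>Bs. card (B \<inter> A) = card (S \<inter> A)"
      "no_edge_meets_three M Bs"
      using obtain_same_shape_blocks[OF assms(1-6) _ _ assms(7-10) S] P by blast
    then obtain P' where "?admissible P'" "?free P < ?free P'"
      using exists_regrouped_partition[OF assms(1-3) _ _ assms(8)] P \<open>\<not> spans_no_edge M S\<close> by blast
    then show False using max not_le by blast
  qed
  then show ?thesis using P by blast
qed

lemma alpha_degree_bound_le:
  fixes \<alpha> :: real
  assumes "\<alpha> < 1 / 10^5" "11 \<le> m"
  shows "100 * (\<alpha> * real (12 * m) ^ 2) \<le> (real m - 1)\<^sup>2"
proof -
  have "100 * (\<alpha> * real (12 * m) ^ 2) = 14400 * (\<alpha> * real m ^ 2)" by (simp add: power_mult_distrib)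
  moreover have "\<alpha> * real m ^ 2 \<le> 1 / 100000 * real m ^ 2" using assms(1) by (intro mult_right_mono) auto
  ultimately have "100 * (\<alpha> * real (12 * m) ^ 2) \<le> 144 / 1000 * real m ^ 2" by linarith
  also have "\<dots> \<le> (10 / 11 * real m) ^ 2" by (simp add: power2_eq_square field_simps)
  also have "\<dots> \<le> (real m - 1)\<^sup>2" using assms(2) by (intro power_mono) auto
  finally show ?thesis .
qed

theorem lemma6p1:
  fixes \<alpha> :: real
  assumes "0 < \<alpha>" and "\<alpha> < 1 / 10^5"
  shows "\<exists>m0::nat. \<forall>m\<ge>m0. \<forall>(A::'a set) B H.
           finite A \<and> finite B \<and> A \<inter> B = {} \<and> card A = 6*m \<and> card B = 6*m \<and>
           is_3graph (A \<union> B) H \<and>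
           (\<forall>v\<in>A \<union> B. alpha_good \<alpha> (A \<union> B) H (bip3 A B) v)
           \<longrightarrow> has_K4minus_factor (A \<union> B) H"
proof (intro exI[of _ 11] allI impI, elim conjE)
  fix m :: nat and A B :: "'a set" and H
  assume m: "11 \<le> m" and AB: "finite A" "finite B" "A \<inter> B = {}" "card A = 6 * m" "card B = 6 * m"
    and good: "\<forall>v\<in>A \<union> B. alpha_good \<alpha> (A \<union> B) H (bip3 A B) v"
  define M where "M = bip3 A B - H"
  define D where "D = \<alpha> * real (card (A \<union> B)) ^ 2"
  have "card (A \<union> B) = 12 * m" using AB by (simp add: card_Un_disjoint)
  then have "100 * D \<le> (real m - 1)\<^sup>2" using alpha_degree_bound_le[OF assms(2) m] unfolding D_def by simp
  moreover have "finite M" "\<forall>e\<in>M. card e = 3" using AB(1,2) unfolding M_def bip3_def by (auto intro: finite_subset)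
  moreover have "\<forall>v\<in>A \<union> B. real (card {e\<in>M. v \<in> e}) \<le> D"
  proof
    fix v assume "v \<in> A \<union> B"
    moreover have "{e\<in>M. v \<in> e} = {e\<in>bip3 A B. v \<in> e \<and> e \<notin> H}" unfolding M_def by blast
    ultimately show "real (card {e\<in>M. v \<in> e}) \<le> D" using good unfolding alpha_good_def D_def by simp
  qed
  ultimately obtain P where "partition_on (A \<union> B) P" "\<forall>S\<in>P. parity_block A B S \<and> spans_no_edge M S"
    using exists_free_parity_block_partition[OF AB(3,1,2,4,5) m, of M D] by blast
  then show "has_K4minus_factor (A \<union> B) H"
    unfolding has_K4minus_factor_def M_def using K4minus_copy_if_parity_block[OF AB(3,1,2)] by blast
qed

end
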